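(* Let $e_1 < e_2 < \cdots < e_d$ and $n$ be positive integers. Let $P$ be the polytope \[P=\mathrm{conv}\, \{ (x^{e_1},x^{e_2},\ldots,x^{e_d}) \mid x=i/n, \ i=0,1,2,\ldots,n \} \] and let $C$ be the convex hull of the curve \[ \{ (x^{e_1},x^{e_2},\ldots,x^{e_d}) \mid 0\leq x \leq 1\}. \] Then \[0\leq \mathrm{Vol}(C) - \mathrm{Vol}(P) \leq \frac{k_d}{n} (e_1+e_2+\cdots+e_d),\] where $k_d$ is a constant depending only on the dimension $d$ and $\mathrm{Vol}$ is $d$-dimensional Lebesgue measure. *)

theory Defs
  imports "HOL-Analysis.Analysis"
begin

definition power_curve :: "('d::finite \<Rightarrow> nat) \<Rightarrow> real \<Rightarrow> real ^ 'd" where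
  "power_curve e x = (\<chi> i. x ^ e i)"

end

theory Submission
  imports Defs
begin

text \<open>Let \<open>a\<^sub>k = min (e\<^sub>k / n) 1\<close>. Every point of the curve differs from the curve point at the
  grid point just below it by at most \<open>a\<^sub>k\<close> in the \<open>k\<close>-th coordinate, so \<open>C\<close> lies in the
  Minkowski sum of \<open>P\<close> with the axis-parallel segments \<open>[-a\<^sub>k, a\<^sub>k]\<close>. Adding a segment
  \<open>[-v, v]\<close> to a compact convex set \<open>K\<close> increases the volume by at most \<open>4 |v| vol B\<close> for a fixed
  ball \<open>B\<close>: a new point leaves \<open>K + [-v, v]\<close> after a step \<open>v\<close> or \<open>-v\<close>, and the points of a
  convex set \<open>M \<subseteq> B\<close> that leave \<open>M\<close> after a step \<open>v\<close> have \<open>\<lfloor>1/|v|\<rfloor>\<close> pairwise disjoint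
  translates along \<open>v\<close> inside a slightly larger ball. Summing over the coordinates gives
  \<open>vol C - vol P \<le> 4 vol B \<Sum>\<^sub>k e\<^sub>k / n\<close>.\<close>

definition centred_segment :: "'a::real_vector \<Rightarrow> 'a set" where
  "centred_segment v = (\<lambda>t. t *\<^sub>R v) ` {-1..1}"

lemma convex_centred_segment: "convex (centred_segment v)"
  unfolding centred_segment_def
  by (intro convex_linear_image convex_real_interval) (simp add: linear_scaleR_left)

lemma compact_centred_segment: "compact (centred_segment (v::'a::real_normed_vector))"
  unfolding centred_segment_def by (intro compact_continuous_image continuous_intros) auto

lemma norm_le_of_mem_centred_segment: "x \<in> centred_segment v \<Longrightarrow> norm x \<le> norm v"
  unfolding centred_segment_def by (auto intro!: mult_left_le_one_le)

lemma scaleR_mem_centred_segment: "\<bar>c\<bar> \<le> a \<Longrightarrow> c *\<^sub>R u \<in> centred_segment (a *\<^sub>R u)"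
proof (cases "a = 0")
  case False
  assume "\<bar>c\<bar> \<le> a"
  then have "c / a \<in> {-1..1}" "c *\<^sub>R u = (c / a) *\<^sub>R (a *\<^sub>R u)"
    using False by (auto simp: divide_le_eq_1 le_divide_eq)
  then show ?thesis unfolding centred_segment_def by blast
qed (auto simp: centred_segment_def image_iff intro!: bexI[of _ 0])

lemma compact_set_plus:
  fixes A B :: "'a::real_normed_vector set"
  assumes "compact A" "compact B" shows "compact (A + B)"
proof -
  have "A + B = {x + y | x y. x \<in> A \<and> y \<in> B}" by (auto simp: set_plus_def)
  then show ?thesis using compact_sums[OF assms] by simp
qed

lemma compact_set_sum:
  fixes B :: "'i \<Rightarrow> 'a::real_normed_vector set"
  assumes "\<And>i. i \<in> I \<Longrightarrow> compact (B i)" shows "compact (\<Sum>i\<in>I. B i)"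
  using assms by (induction I rule: infinite_finite_induct) (auto simp: compact_set_plus)

lemma norm_le_of_mem_sum_centred_segments:
  fixes v :: "'i \<Rightarrow> 'a::real_normed_vector"
  shows "x \<in> (\<Sum>j\<in>J. centred_segment (v j)) \<Longrightarrow> norm x \<le> (\<Sum>j\<in>J. norm (v j))"
proof (induction J arbitrary: x rule: infinite_finite_induct)
  case (insert j J)
  then obtain y z where "y \<in> centred_segment (v j)" "z \<in> (\<Sum>j\<in>J. centred_segment (v j))" "x = y + z"
    by (auto simp: set_plus_def)
  moreover have "norm z \<le> (\<Sum>j\<in>J. norm (v j))" using insert.IH calculation(2) .
  ultimately show ?case
    using insert.hyps norm_le_of_mem_centred_segment[of y "v j"] norm_triangle_ineq[of y z] by simp
qed simp_all

lemma set_plus_sum_centred_segments_subset_cball: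
  fixes P :: "'a::real_normed_vector set" and v :: "'i \<Rightarrow> 'a"
  assumes "P \<subseteq> cball 0 r" "\<And>j. j \<in> J \<Longrightarrow> norm (v j) \<le> 1"
  shows "P + (\<Sum>j\<in>J. centred_segment (v j)) \<subseteq> cball 0 (r + real (card J))"
proof
  fix x assume "x \<in> P + (\<Sum>j\<in>J. centred_segment (v j))"
  then obtain p z where "p \<in> P" "z \<in> (\<Sum>j\<in>J. centred_segment (v j))" "x = p + z"
    by (auto simp: set_plus_def)
  moreover from this have "norm z \<le> real (card J)"
    using norm_le_of_mem_sum_centred_segments sum_bounded_above[of J "\<lambda>j. norm (v j)" 1] assms(2)
    by fastforce
  ultimately show "x \<in> cball 0 (r + real (card J))"
    using assms(1) norm_triangle_ineq[of p z] by auto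
qed

lemma mem_convex_between:
  assumes "convex K" "y + s *\<^sub>R u \<in> K" "y - t *\<^sub>R u \<in> K" "0 \<le> s" "0 \<le> t"
  shows "y \<in> K"
proof (cases "s + t = 0")
  case True
  then have "s = 0" using assms by linarith
  then show ?thesis using assms by simp
next
  case False
  then have st: "s + t > 0" using assms by linarith
  have weights: "t / (s + t) + s / (s + t) = 1" using st by (simp add: add_divide_distrib[symmetric] add.commute)
  have "(t / (s + t)) *\<^sub>R (y + s *\<^sub>R u) + (s / (s + t)) *\<^sub>R (y - t *\<^sub>R u)
      = (t / (s + t) + s / (s + t)) *\<^sub>R y"
    by (simp add: algebra_simps)
  also have "\<dots> = y" by (simp add: weights)
  finally have "(t / (s + t)) *\<^sub>R (y + s *\<^sub>R u) + (s / (s + t)) *\<^sub>R (y - t *\<^sub>R u) = y" .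
  moreover have "(t / (s + t)) *\<^sub>R (y + s *\<^sub>R u) + (s / (s + t)) *\<^sub>R (y - t *\<^sub>R u) \<in> K"
    using st assms weights by (intro convexD[OF assms(1-3)]) auto
  ultimately show ?thesis by simp
qed

text \<open>If both \<open>y + v\<close> and \<open>y - v\<close> lie in \<open>K + [-v, v]\<close>, then \<open>y\<close> lies between two points of
  \<open>K\<close> on the line through \<open>y\<close> in direction \<open>v\<close>.\<close>
lemma set_plus_centred_segment_subset:
  fixes K :: "'a::real_vector set" and v :: "'a"
  assumes "convex K"
  defines "M \<equiv> K + centred_segment v"
  shows "M \<subseteq> K \<union> {y \<in> M. y + v \<notin> M} \<union> {y \<in> M. y - v \<notin> M}"
proof
  fix y assume "y \<in> M"
  show "y \<in> K \<union> {y \<in> M. y + v \<notin> M} \<union> {y \<in> M. y - v \<notin> M}"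
  proof (cases "y + v \<in> M \<and> y - v \<in> M")
    case True
    then obtain k1 t1 k2 t2 where "k1 \<in> K" "t1 \<le> 1" "y + v = k1 + t1 *\<^sub>R v"
      and "k2 \<in> K" "-1 \<le> t2" "y - v = k2 + t2 *\<^sub>R v"
      by (auto simp: M_def set_plus_def centred_segment_def)
    then have "y + (1 - t1) *\<^sub>R v \<in> K" "y - (1 + t2) *\<^sub>R v \<in> K" "0 \<le> 1 - t1" "0 \<le> 1 + t2"
      by (simp_all add: algebra_simps)
    then show ?thesis using mem_convex_between[OF assms(1)] by blast
  qed (use \<open>y \<in> M\<close> in auto)
qed

lemma translate_notin_convex:
  assumes "convex M" "y \<in> M" "y + v \<notin> M" "1 \<le> k"
  shows "y + k *\<^sub>R v \<notin> M"
proof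
  assume "y + k *\<^sub>R v \<in> M"
  then have "(1 - 1/k) *\<^sub>R y + (1/k) *\<^sub>R (y + k *\<^sub>R v) \<in> M"
    using assms by (intro convexD[OF assms(1,2)]) auto
  moreover have "(1 - 1/k) *\<^sub>R y + (1/k) *\<^sub>R (y + k *\<^sub>R v) = y + v"
    using assms(4) by (simp add: algebra_simps)
  ultimately show False using assms(3) by simp
qed

lemma lmeasurable_exit_set:
  fixes M :: "'a::euclidean_space set"
  assumes "compact M" shows "{y \<in> M. y + v \<notin> M} \<in> lmeasurable"
proof -
  have "{y \<in> M. y + v \<notin> M} = M - (\<lambda>y. y - v) ` M" by (force simp: image_iff)
  then show ?thesis
    using assms
    by (metis compact_translation_subtract fmeasurable_Diff fmeasurableD lmeasurable_compact)
qed

text \<open>The translates of the exit set by \<open>0, v, \<dots>, (N - 1) v\<close> are pairwise disjoint,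
  since a point that has left a convex set along \<open>v\<close> never returns.\<close>
lemma measure_exit_set_packing:
  fixes M R :: "'a::euclidean_space set"
  assumes "compact M" "convex M" "R \<in> lmeasurable"
    and translates: "\<And>k. k < N \<Longrightarrow> (+) (real k *\<^sub>R v) ` M \<subseteq> R"
  shows "real N * measure lebesgue {y \<in> M. y + v \<notin> M} \<le> measure lebesgue R"
proof -
  define S where "S = {y \<in> M. y + v \<notin> M}"
  define T where "T k = (+) (real k *\<^sub>R v) ` S" for k
  have S: "S \<in> lmeasurable" unfolding S_def by (rule lmeasurable_exit_set[OF assms(1)])
  then have T: "T k \<in> lmeasurable" for k unfolding T_def by (rule measurable_translation)
  have "T k \<inter> T l = {}" if "k < l" for k l
  proof (rule ccontr)
    assume "T k \<inter> T l \<noteq> {}"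
    then obtain y y' where "y \<in> S" "y' \<in> S" and "real k *\<^sub>R v + y = real l *\<^sub>R v + y'"
      unfolding T_def by auto
    moreover from this have "y = y' + real (l - k) *\<^sub>R v"
      using that by (simp add: of_nat_diff algebra_simps)
    moreover have "y' + real (l - k) *\<^sub>R v \<notin> M"
      using translate_notin_convex[OF assms(2)] \<open>y' \<in> S\<close> that unfolding S_def by simp
    ultimately show False unfolding S_def by simp
  qed
  then have disjoint: "disjoint_family_on T {..<N}"
    unfolding disjoint_family_on_def by (metis inf_commute nat_neq_iff)
  have "measure lebesgue (\<Union>k<N. T k) = (\<Sum>k<N. measure lebesgue (T k))"
    using T fmeasurableD2 by (intro measure_finite_Union[OF finite_lessThan _ disjoint])
      (auto simp: fmeasurableD simp del: emeasure_completion)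
  then have "real N * measure lebesgue S = measure lebesgue (\<Union>k<N. T k)"
    by (simp add: T_def measure_translation)
  also have "\<dots> \<le> measure lebesgue R"
    using translates T S unfolding T_def S_def
    by (intro measure_mono_fmeasurable[OF _ _ assms(3)]) (auto intro: fmeasurableD)
  finally show ?thesis unfolding S_def .
qed

lemma measure_exit_set_le:
  fixes M :: "'a::euclidean_space set"
  assumes "compact M" "convex M" "M \<subseteq> cball 0 r" "norm v \<le> 1"
  shows "measure lebesgue {y \<in> M. y + v \<notin> M} \<le> 2 * norm v * measure lebesgue (cball (0::'a) (r + 1))"
proof (cases "v = 0")
  case False
  define S where "S = {y \<in> M. y + v \<notin> M}"
  define N where "N = nat \<lfloor>1 / norm v\<rfloor>"
  have v: "0 < norm v" "1 \<le> 1 / norm v" using False assms(4) by (auto simp: field_simps)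
  have N: "real N = of_int \<lfloor>1 / norm v\<rfloor>" using v unfolding N_def by simp
  have "(+) (real k *\<^sub>R v) ` M \<subseteq> cball 0 (r + 1)" if "k < N" for k
  proof -
    have "real k \<le> 1 / norm v" using that N by linarith
    then have "norm (real k *\<^sub>R v) \<le> 1" using v by (simp add: field_simps)
    moreover have "norm y \<le> r" if "y \<in> M" for y using assms(3) that by auto
    ultimately show ?thesis
      using norm_triangle_ineq[of "real k *\<^sub>R v"] by (fastforce intro: order_trans)
  qed
  then have packing: "real N * measure lebesgue S \<le> measure lebesgue (cball (0::'a) (r + 1))"
    unfolding S_def by (intro measure_exit_set_packing assms(1,2)) auto
  have "1 / norm v < real N + 1" using N by linarith
  then have "1 < norm v * (real N + 1)" using v by (simp add: field_simps)
  moreover have "1 \<le> real N" using v(2) N by (simp add: one_le_floor)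
  moreover have "norm v \<le> real N * norm v" using calculation(2) v by simp
  ultimately have "1 \<le> real N * (2 * norm v)" by (simp add: algebra_simps)
  then have "measure lebesgue S \<le> (real N * measure lebesgue S) * (2 * norm v)"
    using mult_right_mono[OF _ measure_nonneg[of lebesgue S]] by (fastforce simp: mult_ac)
  also have "\<dots> \<le> measure lebesgue (cball (0::'a) (r + 1)) * (2 * norm v)"
    using packing v by (intro mult_right_mono) auto
  finally show ?thesis unfolding S_def by (simp add: mult_ac)
qed simp

lemma measure_set_plus_centred_segment_le:
  fixes K :: "'a::euclidean_space set"
  assumes "compact K" "convex K" "K + centred_segment v \<subseteq> cball 0 r" "norm v \<le> 1"
  shows "measure lebesgue (K + centred_segment v)
           \<le> measure lebesgue K + 4 * norm v * measure lebesgue (cball (0::'a) (r + 1))"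
proof -
  define M where "M = K + centred_segment v"
  have M: "compact M" "convex M" "M \<subseteq> cball 0 r"
    using assms unfolding M_def
    by (auto intro: compact_set_plus convex_set_plus compact_centred_segment convex_centred_segment)
  have exits: "measure lebesgue {y \<in> M. y + w \<notin> M} \<le> 2 * norm v * measure lebesgue (cball (0::'a) (r + 1))"
    if "norm w = norm v" for w
    using measure_exit_set_le[OF M, of w] that assms(4) by simp
  have lmeas: "K \<in> lmeasurable" "{y \<in> M. y + v \<notin> M} \<in> lmeasurable" "{y \<in> M. y + - v \<notin> M} \<in> lmeasurable"
    using assms(1) lmeasurable_exit_set[OF M(1), of v] lmeasurable_exit_set[OF M(1), of "-v"]
    by (auto intro: lmeasurable_compact)
  have "measure lebesgue M \<le> measure lebesgue (K \<union> {y \<in> M. y + v \<notin> M} \<union> {y \<in> M. y + - v \<notin> M})"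
    using set_plus_centred_segment_subset[OF assms(2), of v] lmeas M(1) unfolding M_def
    by (intro measure_mono_fmeasurable) (auto intro: fmeasurableD lmeasurable_compact)
  also have "\<dots> \<le> measure lebesgue K + measure lebesgue {y \<in> M. y + v \<notin> M} + measure lebesgue {y \<in> M. y + - v \<notin> M}"
    using lmeas by (smt (verit) fmeasurableD measure_Un_le sets.Un)
  finally show ?thesis using exits[of v] exits[of "-v"] unfolding M_def by simp
qed

lemma measure_set_plus_sum_centred_segments_le:
  fixes P :: "'a::euclidean_space set" and v :: "'i \<Rightarrow> 'a"
  assumes "finite J" "compact P" "convex P" "P \<subseteq> cball 0 r"
    and "\<And>j. j \<in> J \<Longrightarrow> norm (v j) \<le> 1" "r + real (card J) \<le> \<rho>"
  shows "measure lebesgue (P + (\<Sum>j\<in>J. centred_segment (v j)))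
           \<le> measure lebesgue P + 4 * (\<Sum>j\<in>J. norm (v j)) * measure lebesgue (cball (0::'a) (\<rho> + 1))"
  using assms(1,5,6)
proof (induction J rule: finite_induct)
  case (insert j J)
  define K where "K = P + (\<Sum>j\<in>J. centred_segment (v j))"
  have K: "compact K" "convex K"
    using assms(2,3) unfolding K_def
    by (auto intro!: compact_set_plus convex_set_plus compact_set_sum convex_set_sum
        compact_centred_segment convex_centred_segment)
  have sum_insert: "P + (\<Sum>j\<in>insert j J. centred_segment (v j)) = K + centred_segment (v j)"
    using insert.hyps by (simp add: K_def ac_simps)
  have "K + centred_segment (v j) \<subseteq> cball 0 \<rho>"
    using set_plus_sum_centred_segments_subset_cball[OF assms(4), of "insert j J" v] insert.prems
    unfolding sum_insert by (auto simp: subset_iff)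
  then have "measure lebesgue (K + centred_segment (v j))
      \<le> measure lebesgue K + 4 * norm (v j) * measure lebesgue (cball (0::'a) (\<rho> + 1))"
    using insert.prems by (intro measure_set_plus_centred_segment_le K) auto
  also have "measure lebesgue K
      \<le> measure lebesgue P + 4 * (\<Sum>j\<in>J. norm (v j)) * measure lebesgue (cball (0::'a) (\<rho> + 1))"
    using insert by (simp add: K_def)
  finally show ?case unfolding sum_insert using insert.hyps by (simp add: algebra_simps)
qed simp

lemma norm_power_curve_le:
  assumes "0 \<le> x" "x \<le> 1"
  shows "norm (power_curve (e :: 'd::finite \<Rightarrow> nat) x) \<le> real CARD('d)"
proof -
  have "norm (power_curve e x) \<le> (\<Sum>k\<in>UNIV. \<bar>x ^ e k\<bar>)"
    using norm_le_l1_cart[of "power_curve e x"] by (simp add: power_curve_def)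
  also have "\<dots> \<le> (\<Sum>k\<in>(UNIV :: 'd set). 1)"
    using assms by (intro sum_mono) (simp add: power_le_one)
  finally show ?thesis by simp
qed

lemma power_diff_le:
  fixes g x :: real
  assumes "0 \<le> g" "g \<le> x" "x \<le> 1"
  shows "x ^ m - g ^ m \<le> real m * (x - g)"
proof (induction m)
  case (Suc m)
  have "x ^ Suc m - g ^ Suc m = x * (x ^ m - g ^ m) + g ^ m * (x - g)"
    by (simp add: algebra_simps)
  also have "\<dots> \<le> (x ^ m - g ^ m) + (x - g)"
    using assms power_mono[OF assms(2,1), of m]
    by (intro add_mono mult_left_le_one_le mult_left_le_one_le[of "x - g"]) (auto intro: power_le_one)
  finally show ?case using Suc.IH by (simp add: algebra_simps)
qed simp

lemma grid_point_below:
  assumes "0 < n" "0 \<le> x" "x \<le> 1"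
  obtains i where "i \<le> n" "real i / real n \<le> x" "x - real i / real n \<le> 1 / real n"
proof
  define i where "i = nat \<lfloor>x * real n\<rfloor>"
  have i: "real i = of_int \<lfloor>x * real n\<rfloor>" unfolding i_def using assms by simp
  then have below: "real i \<le> x * real n" and above: "x * real n \<le> real i + 1" by linarith+
  have "real i \<le> real n" using below assms by (smt (verit) mult_left_le_one_le of_nat_0_le_iff)
  then show "i \<le> n" by simp
  show "real i / real n \<le> x" using below assms(1) by (simp add: field_simps)
  have "x - real i / real n = (x * real n - real i) / real n" using assms(1) by (simp add: field_simps)
  then show "x - real i / real n \<le> 1 / real n" using above by (simp add: divide_right_mono)
qed

lemma power_curve_mem_set_plus:
  fixes e :: "'d::finite \<Rightarrow> nat"
  assumes "0 < n" "0 \<le> x" "x \<le> 1"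
  shows "power_curve e x \<in> power_curve e ` {real i / real n | i. i \<le> n}
           + (\<Sum>k\<in>UNIV. centred_segment (min (real (e k) / real n) 1 *\<^sub>R axis k 1))"
proof -
  obtain i where i: "i \<le> n" "real i / real n \<le> x" "x - real i / real n \<le> 1 / real n"
    using grid_point_below[OF assms] .
  define g where "g = real i / real n"
  define w where "w = power_curve e x - power_curve e g"
  have "\<bar>w $ k\<bar> \<le> min (real (e k) / real n) 1" for k
  proof -
    have "x ^ e k - g ^ e k \<le> real (e k) * (x - g)"
      using i assms unfolding g_def by (intro power_diff_le) auto
    also have "\<dots> \<le> real (e k) / real n"
      using i mult_left_mono[of "x - g" "1 / real n" "real (e k)"] unfolding g_def by simp
    finally have "x ^ e k - g ^ e k \<le> real (e k) / real n" .
    moreover have "0 \<le> g ^ e k" "g ^ e k \<le> x ^ e k" "x ^ e k \<le> 1"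
      using i assms unfolding g_def by (auto intro: power_mono power_le_one)
    ultimately show ?thesis unfolding w_def power_curve_def by simp
  qed
  then have "\<forall>k\<in>UNIV. (w $ k) *\<^sub>R axis k 1 \<in> centred_segment (min (real (e k) / real n) 1 *\<^sub>R axis k 1)"
    by (simp add: scaleR_mem_centred_segment)
  moreover have "w = (\<Sum>k\<in>UNIV. (w $ k) *\<^sub>R axis k 1)"
    using basis_expansion[of w] by (simp add: scalar_mult_eq_scaleR)
  ultimately have "w \<in> (\<Sum>k\<in>UNIV. centred_segment (min (real (e k) / real n) 1 *\<^sub>R axis k 1))"
    unfolding set_sum_alt[OF finite_class.finite_UNIV] by blast
  moreover have "power_curve e g \<in> power_curve e ` {real i / real n | i. i \<le> n}"
    using i unfolding g_def by blast
  ultimately have "power_curve e g + w \<in> power_curve e ` {real i / real n | i. i \<le> n}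
           + (\<Sum>k\<in>UNIV. centred_segment (min (real (e k) / real n) 1 *\<^sub>R axis k 1))"
    by (intro set_plus_intro)
  then show ?thesis by (simp add: w_def)
qed

lemma measure_convex_hull_power_curve_le:
  fixes e :: "'d::finite \<Rightarrow> nat"
  assumes "0 < n"
  defines "P \<equiv> convex hull (power_curve e ` {real i / real n | i. i \<le> n})"
    and "C \<equiv> convex hull (power_curve e ` {0..1})"
  shows "measure lborel P \<le> measure lborel C"
    and "measure lborel C \<le> measure lborel P
           + 4 * measure lebesgue (cball (0 :: real^'d) (2 * real CARD('d) + 1)) / real n * real (\<Sum>k\<in>UNIV. e k)"
proof -
  define Z where "Z = (\<Sum>k\<in>UNIV. centred_segment (min (real (e k) / real n) 1 *\<^sub>R axis k (1::real)))"
  define R where "R = cball (0 :: real^'d) (2 * real CARD('d) + 1)"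
  have "{real i / real n | i. i \<le> n} = (\<lambda>i. real i / real n) ` {..n}" by auto
  then have grid: "finite {real i / real n | i. i \<le> n}" "{real i / real n | i. i \<le> n} \<subseteq> {0..1}"
    using assms(1) by (auto simp: divide_le_eq_1)
  have "power_curve e ` {real i / real n | i. i \<le> n} \<subseteq> cball 0 (real CARD('d))"
    using grid(2) norm_power_curve_le[of _ e] by auto
  then have P: "compact P" "convex P" "P \<subseteq> cball 0 (real CARD('d))"
    using grid(1) unfolding P_def
    by (simp_all add: finite_imp_compact_convex_hull hull_minimal)
  have Z: "compact Z" "convex Z"
    unfolding Z_def by (simp_all add: compact_set_sum convex_set_sum compact_centred_segment convex_centred_segment)
  have "power_curve e ` {real i / real n | i. i \<le> n} + Z \<subseteq> P + Z"
    unfolding P_def by (intro set_plus_mono2 hull_subset order_refl)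
  then have "power_curve e ` {0..1} \<subseteq> P + Z"
    using power_curve_mem_set_plus[OF assms(1), of _ e] unfolding Z_def by auto
  then have "C \<subseteq> P + Z"
    unfolding C_def using P(2) Z(2) by (intro hull_minimal convex_set_plus)
  have C: "compact C" "P \<subseteq> C"
    using grid(2) unfolding C_def P_def power_curve_def
    by (auto intro!: compact_convex_hull compact_continuous_image continuous_intros hull_mono)
  have lborel_eq: "measure lborel S = measure lebesgue S" if "compact S" for S :: "(real^'d) set"
    using that by (simp add: borel_compact)
  show "measure lborel P \<le> measure lborel C"
    using P(1) C by (simp add: lborel_eq measure_mono_fmeasurable fmeasurableD lmeasurable_compact)
  have "measure lebesgue C \<le> measure lebesgue (P + Z)"
    using P(1) Z(1) C(1) \<open>C \<subseteq> P + Z\<close>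
    by (intro measure_mono_fmeasurable fmeasurableD lmeasurable_compact compact_set_plus)
  also have "\<dots> \<le> measure lebesgue P
      + 4 * (\<Sum>k\<in>UNIV. norm (min (real (e k) / real n) 1 *\<^sub>R axis k (1::real))) * measure lebesgue R"
    using P unfolding Z_def R_def by (intro measure_set_plus_sum_centred_segments_le) auto
  also have "\<dots> \<le> measure lebesgue P + 4 * (\<Sum>k\<in>UNIV. real (e k) / real n) * measure lebesgue R"
    by (intro add_left_mono mult_right_mono mult_left_mono sum_mono) auto
  also have "\<dots> = measure lebesgue P + 4 * measure lebesgue R / real n * real (\<Sum>k\<in>UNIV. e k)"
    by (simp add: sum_divide_distrib[symmetric])
  finally show "measure lborel C \<le> measure lborel P
      + 4 * measure lebesgue (cball (0 :: real^'d) (2 * real CARD('d) + 1)) / real n * real (\<Sum>k\<in>UNIV. e k)"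
    unfolding lborel_eq[OF P(1)] lborel_eq[OF C(1)] R_def .
qed

theorem proposition3p3:
  "\<exists>k::real. \<forall>(e :: 'd::{finite,linorder} \<Rightarrow> nat) (n::nat).
      strict_mono e \<and> (\<forall>i. 0 < e i) \<and> 0 < n \<longrightarrow>
      (let P = convex hull (power_curve e ` {real i / real n | i. i \<le> n});
           C = convex hull (power_curve e ` {0..1})
       in 0 \<le> measure lborel C - measure lborel P \<and>
          measure lborel C - measure lborel P \<le> k / real n * real (\<Sum>i\<in>UNIV. e i))"
proof (intro exI allI impI)
  fix e :: "'d::{finite,linorder} \<Rightarrow> nat" and n :: nat
  assume "strict_mono e \<and> (\<forall>i. 0 < e i) \<and> 0 < n"
  then have "0 < n" by blast
  then show "let P = convex hull (power_curve e ` {real i / real n | i. i \<le> n});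
           C = convex hull (power_curve e ` {0..1})
       in 0 \<le> measure lborel C - measure lborel P \<and> measure lborel C - measure lborel P
          \<le> 4 * measure lebesgue (cball (0 :: real^'d::{finite,linorder}) (2 * real CARD('d) + 1)) / real n * real (\<Sum>i\<in>UNIV. e i)"
    using measure_convex_hull_power_curve_le[of n e] by (simp add: Let_def)
qed

end
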